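(* Assume (i) the Singer family hypothesis: for every prime $p$ there is a finite $S\subseteq\mathbb{Z}$ with $|S|=p+1$ that is Sidon modulo $p^2+p+1$; and (ii) the subpolynomial prime gap hypothesis: for every real $\delta>0$ there exists $x_0$ such that for every natural number $x\ge x_0$ there is a prime $p$ with $x-x^{\delta}<p\le x$. Then for every real $\varepsilon>0$ there exist $C\ge0$ and $N_0\in\mathbb{N}$ such that $h(N)\ge\sqrt{N}-C N^{\varepsilon}$ for all $N\ge N_0$.
   Context: A finite set $A\subseteq\mathbb{Z}$ is Sidon if $a+b=c+d$ with $a,b,c,d\in A$ implies $\{a,b\}=\{c,d\}$ as unordered pairs; for a positive integer $M$ it is Sidon modulo $M$ if $M\mid (a+b)-(c+d)$ with $a,b,c,d\in A$ implies $\{a,b\}=\{c,d\}$ as unordered pairs. For a natural number $N$, $h(N)=\max\{|A| : A\subseteq\{1,\dots,N\},\ A\text{ Sidon}\}$. *)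

theory Defs
  imports Complex_Main "HOL-Computational_Algebra.Primes"
begin

definition sidon :: "int set \<Rightarrow> bool" where
  "sidon A \<longleftrightarrow> (\<forall>a\<in>A. \<forall>b\<in>A. \<forall>c\<in>A. \<forall>d\<in>A. a + b = c + d \<longrightarrow> {a, b} = {c, d})"

definition sidon_mod :: "int \<Rightarrow> int set \<Rightarrow> bool" where
  "sidon_mod M A \<longleftrightarrow> (\<forall>a\<in>A. \<forall>b\<in>A. \<forall>c\<in>A. \<forall>d\<in>A.
      M dvd ((a + b) - (c + d)) \<longrightarrow> {a, b} = {c, d})"

definition h :: "nat \<Rightarrow> nat" where
  "h N = Max {card A | A. A \<subseteq> {1..int N} \<and> sidon A}"

end

(* Reducing a Singer set modulo M = p^2 + p + 1 and shifting it by one gives a Sidon subset of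
   {1..M} with p + 1 elements, so h N >= p + 1 whenever p^2 + p + 1 <= N.  The gap hypothesis,
   applied at x = floor (sqrt N) - 1, supplies a prime p <= x with p > x - x^eps; then
   (p + 1)^2 <= N and h N >= p + 1 > sqrt N - 2 N^eps. *)

theory Submission
  imports Defs "HOL-Library.Discrete_Functions"
begin

lemma inj_on_mod_if_sidon_mod:
  assumes "sidon_mod M S"
  shows "inj_on (\<lambda>a. a mod M) S"
proof (rule inj_onI)
  fix a c assume a: "a \<in> S" and c: "c \<in> S" and "a mod M = c mod M"
  then have "M dvd (a + a) - (c + a)" by (simp add: mod_eq_dvd_iff)
  then have "{a, a} = {c, a}" using assms a c unfolding sidon_mod_def by blast
  then show "a = c" by auto
qed

lemma sidon_image_mod:
  assumes "sidon_mod M S"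
  shows "sidon ((\<lambda>a. a mod M) ` S)"
  unfolding sidon_def
proof (intro ballI impI)
  fix a' b' c' d'
  assume "a' \<in> (\<lambda>a. a mod M) ` S" "b' \<in> (\<lambda>a. a mod M) ` S"
    "c' \<in> (\<lambda>a. a mod M) ` S" "d' \<in> (\<lambda>a. a mod M) ` S"
    and sum_eq: "a' + b' = c' + d'"
  then obtain a b c d where "a \<in> S" "b \<in> S" "c \<in> S" "d \<in> S"
    and residues: "a' = a mod M" "b' = b mod M" "c' = c mod M" "d' = d mod M"
    by blast
  moreover have "(a + b) mod M = (c + d) mod M"
    by (metis mod_add_eq residues sum_eq)
  then have "M dvd (a + b) - (c + d)" by (simp add: mod_eq_dvd_iff)
  ultimately have "{a, b} = {c, d}" using assms unfolding sidon_mod_def by blast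
  then show "{a', b'} = {c', d'}" using residues by (auto simp: doubleton_eq_iff)
qed

lemma sidon_translate:
  assumes "sidon A"
  shows "sidon ((+) t ` A)"
  using assms unfolding sidon_def by (auto simp: doubleton_eq_iff)

lemma card_le_h:
  assumes "A \<subseteq> {1..int N}" and "sidon A"
  shows "card A \<le> h N"
proof -
  have "{card A | A. A \<subseteq> {1..int N} \<and> sidon A} \<subseteq> card ` Pow {1..int N}" by auto
  then have "finite {card A | A. A \<subseteq> {1..int N} \<and> sidon A}"
    by (rule finite_subset) simp
  then show ?thesis unfolding h_def using assms by (intro Max_ge) blast+
qed

lemma card_le_h_if_sidon_mod:
  assumes "sidon_mod M S" and "0 < M" and "M \<le> int N"
  shows "card S \<le> h N"
proof -
  let ?A = "(+) 1 ` (\<lambda>a. a mod M) ` S"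
  have "card ?A = card S"
    using inj_on_mod_if_sidon_mod[OF assms(1)]
    by (simp add: card_image comp_inj_on image_comp[symmetric])
  moreover have "?A \<subseteq> {1..int N}"
  proof
    fix x assume "x \<in> ?A"
    then obtain a where "x = 1 + a mod M" by blast
    moreover have "0 \<le> a mod M" "a mod M < M" using \<open>0 < M\<close> by simp_all
    ultimately show "x \<in> {1..int N}" using \<open>M \<le> int N\<close> by simp
  qed
  moreover have "sidon ?A" by (intro sidon_translate sidon_image_mod assms(1))
  ultimately show ?thesis using card_le_h by metis
qed

lemma exists_below_sqrt_if_small_gaps:
  fixes \<epsilon> x0 :: real
  assumes "\<epsilon> \<ge> 0"
    and gaps: "\<forall>x::nat. real x \<ge> x0 \<longrightarrow> (\<exists>p. P p \<and> real x - real x powr \<epsilon> < real p \<and> p \<le> x)"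
    and large: "(nat \<lceil>x0\<rceil> + 2)\<^sup>2 \<le> N"
  shows "\<exists>p. P p \<and> (p + 1)\<^sup>2 \<le> N \<and> sqrt (real N) - 2 * real N powr \<epsilon> < real p + 1"
proof -
  define s where "s = floor_sqrt N"
  have "nat \<lceil>x0\<rceil> + 2 \<le> s" using large by (simp add: s_def le_floor_sqrt_iff)
  then have "real (s - 1) \<ge> x0" by linarith
  then obtain p where "P p" and p_gt: "real (s - 1) - real (s - 1) powr \<epsilon> < real p"
    and "p \<le> s - 1"
    using gaps by blast
  have "(p + 1)\<^sup>2 \<le> s\<^sup>2"
    using \<open>p \<le> s - 1\<close> \<open>nat \<lceil>x0\<rceil> + 2 \<le> s\<close> by (intro power_mono) auto
  also have "\<dots> \<le> N" by (simp add: s_def)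
  finally have "(p + 1)\<^sup>2 \<le> N" .
  have "real N < (real s + 1)\<^sup>2"
  proof -
    have "N < (s + 1)\<^sup>2" using Suc_floor_sqrt_power2_gt[of N] by (simp add: s_def)
    then have "real N < real ((s + 1)\<^sup>2)" by (simp only: of_nat_less_iff)
    then show ?thesis by (simp add: add.commute)
  qed
  then have "sqrt (real N) < real s + 1" by (intro real_less_lsqrt) auto
  have "s \<le> N" by (simp add: s_def floor_sqrt_le)
  then have "real (s - 1) powr \<epsilon> \<le> real N powr \<epsilon>"
    using \<open>\<epsilon> \<ge> 0\<close> by (intro powr_mono2) auto
  moreover have "1 \<le> real N powr \<epsilon>"
    using \<open>s \<le> N\<close> \<open>nat \<lceil>x0\<rceil> + 2 \<le> s\<close> \<open>\<epsilon> \<ge> 0\<close>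
    by (intro ge_one_powr_ge_zero) auto
  ultimately have "sqrt (real N) - 2 * real N powr \<epsilon> < real p + 1"
    using \<open>sqrt (real N) < real s + 1\<close> p_gt \<open>nat \<lceil>x0\<rceil> + 2 \<le> s\<close> by simp
  with \<open>P p\<close> \<open>(p + 1)\<^sup>2 \<le> N\<close> show ?thesis by blast
qed

theorem mainTheorem14:
  assumes singer: "\<And>p::nat. prime p \<Longrightarrow>
      \<exists>S::int set. finite S \<and> card S = p + 1 \<and> sidon_mod (int (p^2 + p + 1)) S"
  and gaps: "\<And>\<delta>::real. \<delta> > 0 \<Longrightarrow>
      \<exists>x0::real. \<forall>x::nat. real x \<ge> x0 \<longrightarrow>
        (\<exists>p::nat. prime p \<and> real x - real x powr \<delta> < real p \<and> p \<le> x)"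
  shows "\<forall>\<epsilon>::real. \<epsilon> > 0 \<longrightarrow>
      (\<exists>C::real. C \<ge> 0 \<and> (\<exists>N0::nat. \<forall>N\<ge>N0.
         real (h N) \<ge> sqrt (real N) - C * real N powr \<epsilon>))"
proof (intro allI impI)
  fix \<epsilon> :: real
  assume "\<epsilon> > 0"
  then obtain x0 where x0: "\<forall>x::nat. real x \<ge> x0 \<longrightarrow>
      (\<exists>p. prime p \<and> real x - real x powr \<epsilon> < real p \<and> p \<le> x)"
    using gaps by blast
  have "real (h N) \<ge> sqrt (real N) - 2 * real N powr \<epsilon>"
    if large: "(nat \<lceil>x0\<rceil> + 2)\<^sup>2 \<le> N" for N
  proof -
    obtain p where "prime p" and "(p + 1)\<^sup>2 \<le> N"
      and p_bound: "sqrt (real N) - 2 * real N powr \<epsilon> < real p + 1"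
      using exists_below_sqrt_if_small_gaps[OF _ x0 large] \<open>\<epsilon> > 0\<close> by auto
    obtain S where "card S = p + 1" and "sidon_mod (int (p\<^sup>2 + p + 1)) S"
      using singer[OF \<open>prime p\<close>] by blast
    moreover have "int (p\<^sup>2 + p + 1) \<le> int N"
      using \<open>(p + 1)\<^sup>2 \<le> N\<close> unfolding of_nat_le_iff by (simp add: power2_eq_square)
    ultimately have "p + 1 \<le> h N"
      using card_le_h_if_sidon_mod[of "int (p\<^sup>2 + p + 1)" S N]
      by (simp only: of_nat_0_less_iff)
    with p_bound show ?thesis by linarith
  qed
  then show "\<exists>C\<ge>0. \<exists>N0. \<forall>N\<ge>N0. real (h N) \<ge> sqrt (real N) - C * real N powr \<epsilon>"
    by (intro exI[of _ 2]) auto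
qed

end
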